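(* Let $(S,T,\alpha,\beta)$ be a matched product system of left inverse semi-braces. Then for all $a\in S$ and $u\in T$: $$\lambda_a\,\alpha_{\beta_a^{-1}(u)}=\alpha_u\,\lambda_{\alpha_u^{-1}(a)},\qquad \lambda_u\,\beta_{\alpha_u^{-1}(a)}=\beta_a\,\lambda_{\beta_a^{-1}(u)}$$ as maps $S\to S$ and $T\to T$ respectively.
   Context: An inverse semigroup is a semigroup $(S,\cdot)$ in which for each $a$ there is a unique $a^{-1}$ with $aa^{-1}a=a$, $a^{-1}aa^{-1}=a^{-1}$. A left inverse semi-brace is a triple $(S,+,\cdot)$ with $(S,+)$ a semigroup, $(S,\cdot)$ an inverse semigroup and $a(b+c)=ab+a(a^{-1}+c)$ for all $a,b,c$; in it set $\lambda_a(b)=a(a^{-1}+b)$ (similarly in $T$). A matched product system of left inverse semi-braces is a quadruple $(S,T,\alpha,\beta)$ where $S,T$ are left inverse semi-braces, $\alpha:T\to\mathrm{Aut}(S,+)$ is a homomorphism of inverse semigroups from $(T,\cdot)$ into the automorphism group of $(S,+)$, $\beta:S\to\mathrm{Aut}(T,+)$ is a homomorphism of inverse semigroups from $(S,\cdot)$ into the automorphism group of $(T,+)$ (write $\alpha_u=\alpha(u)$, $\beta_a=\beta(a)$, and $\alpha_u^{-1},\beta_a^{-1}$ for the inverse maps), such that for all $a,b\in S$, $u,v\in T$: $\alpha_u(\alpha_u^{-1}(a)\,b)=a\,\alpha_{\beta_a^{-1}(u)}(b)$ and $\beta_a(\beta_a^{-1}(u)\,v)=u\,\beta_{\alpha_u^{-1}(a)}(v)$;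 and if $\alpha_u(\alpha_u^{-1}(a)\,a)=a$ and $\beta_a(\beta_a^{-1}(u)\,u)=u$, then $\alpha_u(a)=a$ and $\beta_a(u)=u$. *)

theory Defs
  imports Main
begin

text \<open>Structures are carried by whole types: S is the type 'a with operations
  add (+) and mult (\<cdot>).\<close>

definition semigroup_op :: "('a \<Rightarrow> 'a \<Rightarrow> 'a) \<Rightarrow> bool" where
  "semigroup_op f \<longleftrightarrow> (\<forall>a b c. f (f a b) c = f a (f b c))"

definition inverse_semigroup :: "('a \<Rightarrow> 'a \<Rightarrow> 'a) \<Rightarrow> bool" where
  "inverse_semigroup mult \<longleftrightarrow> semigroup_op mult \<and>
     (\<forall>a. \<exists>!b. mult (mult a b) a = a \<and> mult (mult b a) b = b)"

definition isg_inv :: "('a \<Rightarrow> 'a \<Rightarrow> 'a) \<Rightarrow> 'a \<Rightarrow> 'a" where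
  "isg_inv mult a = (THE b. mult (mult a b) a = a \<and> mult (mult b a) b = b)"

definition left_inverse_semi_brace :: "('a \<Rightarrow> 'a \<Rightarrow> 'a) \<Rightarrow> ('a \<Rightarrow> 'a \<Rightarrow> 'a) \<Rightarrow> bool" where
  "left_inverse_semi_brace add mult \<longleftrightarrow> semigroup_op add \<and> inverse_semigroup mult \<and>
     (\<forall>a b c. mult a (add b c) = add (mult a b) (mult a (add (isg_inv mult a) c)))"

definition lam :: "('a \<Rightarrow> 'a \<Rightarrow> 'a) \<Rightarrow> ('a \<Rightarrow> 'a \<Rightarrow> 'a) \<Rightarrow> 'a \<Rightarrow> 'a \<Rightarrow> 'a" where
  "lam add mult a b = mult a (add (isg_inv mult a) b)"

definition add_aut :: "('a \<Rightarrow> 'a \<Rightarrow> 'a) \<Rightarrow> ('a \<Rightarrow> 'a) \<Rightarrow> bool" where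
  "add_aut add f \<longleftrightarrow> bij f \<and> (\<forall>a b. f (add a b) = add (f a) (f b))"

definition hom_into_aut :: "('b \<Rightarrow> 'b \<Rightarrow> 'b) \<Rightarrow> ('a \<Rightarrow> 'a \<Rightarrow> 'a) \<Rightarrow> ('b \<Rightarrow> 'a \<Rightarrow> 'a) \<Rightarrow> bool" where
  "hom_into_aut multT addS \<alpha> \<longleftrightarrow> (\<forall>u. add_aut addS (\<alpha> u)) \<and>
     (\<forall>u v. \<alpha> (multT u v) = \<alpha> u \<circ> \<alpha> v)"

definition matched_product_system ::
  "('a \<Rightarrow> 'a \<Rightarrow> 'a) \<Rightarrow> ('a \<Rightarrow> 'a \<Rightarrow> 'a) \<Rightarrow> ('b \<Rightarrow> 'b \<Rightarrow> 'b) \<Rightarrow> ('b \<Rightarrow> 'b \<Rightarrow> 'b)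
   \<Rightarrow> ('b \<Rightarrow> 'a \<Rightarrow> 'a) \<Rightarrow> ('a \<Rightarrow> 'b \<Rightarrow> 'b) \<Rightarrow> bool" where
  "matched_product_system addS multS addT multT \<alpha> \<beta> \<longleftrightarrow>
     left_inverse_semi_brace addS multS \<and> left_inverse_semi_brace addT multT \<and>
     hom_into_aut multT addS \<alpha> \<and> hom_into_aut multS addT \<beta> \<and>
     (\<forall>a b u. \<alpha> u (multS (inv (\<alpha> u) a) b) = multS a (\<alpha> (inv (\<beta> a) u) b)) \<and>
     (\<forall>a u v. \<beta> a (multT (inv (\<beta> a) u) v) = multT u (\<beta> (inv (\<alpha> u) a) v)) \<and>
     (\<forall>a u. \<alpha> u (multS (inv (\<alpha> u) a) a) = a \<and> \<beta> a (multT (inv (\<beta> a) u) u) = u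
        \<longrightarrow> \<alpha> u a = a \<and> \<beta> a u = u)"

end

theory Submission
  imports Defs
begin

text \<open>Write \<open>c = \<alpha>\<^sub>u\<^sup>-\<^sup>1(a)\<close> and \<open>w = \<beta>\<^sub>a\<^sup>-\<^sup>1(u)\<close>. The compatibility
  \<open>\<alpha>\<^sub>u(c y) = a \<alpha>\<^sub>w(y)\<close> together with the semi-brace law
  \<open>c(x + b) = c x + \<lambda>\<^sub>c(b)\<close>, applied to \<open>x = \<alpha>\<^sub>w\<^sup>-\<^sup>1(a\<^sup>-\<^sup>1)\<close>, gives
  \<open>\<lambda>\<^sub>a(\<alpha>\<^sub>w(b)) = a a\<^sup>-\<^sup>1 + \<alpha>\<^sub>u(\<lambda>\<^sub>c(b))\<close>. Since \<open>\<lambda>\<^sub>c(b)\<close> absorbs the idempotent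
  \<open>c c\<^sup>-\<^sup>1\<close> added on the left, it suffices to show \<open>\<alpha>\<^sub>u(c c\<^sup>-\<^sup>1) = a a\<^sup>-\<^sup>1\<close>.
  Since \<open>\<beta>\<close> maps idempotents of \<open>S\<close> to the identity, \<open>\<alpha>\<^sub>u\<close> intertwines left multiplication by
  \<open>\<alpha>\<^sub>u\<^sup>-\<^sup>1(a a\<^sup>-\<^sup>1)\<close> with left multiplication by \<open>a a\<^sup>-\<^sup>1\<close>; hence \<open>\<alpha>\<^sub>u\<^sup>-\<^sup>1(a a\<^sup>-\<^sup>1)\<close>
  is an idempotent in \<open>c S\<close> fixing \<open>c\<close> from the left, and in an inverse semigroup,
  where idempotents commute, the only such idempotent is \<open>c c\<^sup>-\<^sup>1\<close>.
  The second identity is the first one for the swapped system \<open>(T, S, \<beta>, \<alpha>)\<close>.\<close>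

locale inverse_semigroup_mult =
  fixes mult :: "'a \<Rightarrow> 'a \<Rightarrow> 'a" (infixl "\<cdot>" 70)
  assumes inverse_semigroup: "inverse_semigroup mult"
begin

abbreviation ginv :: "'a \<Rightarrow> 'a" where
  "ginv \<equiv> isg_inv mult"

lemma assoc: "a \<cdot> b \<cdot> c = a \<cdot> (b \<cdot> c)"
  using inverse_semigroup unfolding inverse_semigroup_def semigroup_op_def by blast

lemma ginv_props: "a \<cdot> ginv a \<cdot> a = a \<and> ginv a \<cdot> a \<cdot> ginv a = ginv a"
  unfolding isg_inv_def
  by (rule theI') (use inverse_semigroup in \<open>simp add: inverse_semigroup_def\<close>)

lemma mult_ginv_mult: "a \<cdot> ginv a \<cdot> a = a"
  using ginv_props by blast

lemma ginv_mult_ginv: "ginv a \<cdot> a \<cdot> ginv a = ginv a"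
  using ginv_props by blast

lemma ginv_unique: "a \<cdot> b \<cdot> a = a \<Longrightarrow> b \<cdot> a \<cdot> b = b \<Longrightarrow> b = ginv a"
  using inverse_semigroup ginv_props unfolding inverse_semigroup_def by blast

lemma mult_ginv_idempotent: "a \<cdot> ginv a \<cdot> (a \<cdot> ginv a) = a \<cdot> ginv a"
  by (simp add: assoc[symmetric] mult_ginv_mult)

lemma idempotent_mult:
  assumes e: "e \<cdot> e = e" and f: "f \<cdot> f = f"
  shows "e \<cdot> f \<cdot> (e \<cdot> f) = e \<cdot> f"
proof -
  define p where "p = e \<cdot> f"
  define x where "x = ginv p"
  have e2: "e \<cdot> (e \<cdot> z) = e \<cdot> z" and f2: "f \<cdot> (f \<cdot> z) = f \<cdot> z" for z
    by (simp_all add: assoc[symmetric] e f)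
  have pxp: "p \<cdot> x \<cdot> p = p" and xpx: "x \<cdot> p \<cdot> x = x"
    unfolding x_def by (simp_all add: mult_ginv_mult ginv_mult_ginv)
  \<comment> \<open>\<open>f x e\<close> is another inverse of \<open>p\<close>, so \<open>x = f x e\<close>, which makes \<open>x\<close> idempotent.\<close>
  have "p \<cdot> (f \<cdot> x \<cdot> e) \<cdot> p = p \<cdot> x \<cdot> p"
    unfolding p_def by (simp add: assoc e2 f2 e)
  moreover have "f \<cdot> x \<cdot> e \<cdot> p \<cdot> (f \<cdot> x \<cdot> e) = f \<cdot> (x \<cdot> p \<cdot> x) \<cdot> e"
    unfolding p_def by (simp add: assoc e2 f2 e)
  ultimately have "f \<cdot> x \<cdot> e = ginv p"
    using ginv_unique pxp xpx by metis
  then have x_eq: "x = f \<cdot> x \<cdot> e"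
    unfolding x_def by simp
  have "x \<cdot> x = f \<cdot> (x \<cdot> p \<cdot> x) \<cdot> e"
    by (subst (1 2) x_eq) (simp add: assoc p_def)
  also have "\<dots> = x"
    by (simp add: xpx flip: x_eq)
  finally have xx: "x \<cdot> x = x" .
  have "p = ginv x"
    using ginv_unique[OF xpx pxp] .
  moreover have "ginv x = x"
    using ginv_unique[of x x] xx by simp
  ultimately show ?thesis
    using xx p_def by simp
qed

lemma idempotents_commute:
  assumes e: "e \<cdot> e = e" and f: "f \<cdot> f = f"
  shows "e \<cdot> f = f \<cdot> e"
proof -
  have ef: "e \<cdot> f \<cdot> (e \<cdot> f) = e \<cdot> f" and fe: "f \<cdot> e \<cdot> (f \<cdot> e) = f \<cdot> e"
    using idempotent_mult e f by blast+
  have e2: "e \<cdot> (e \<cdot> z) = e \<cdot> z" and f2: "f \<cdot> (f \<cdot> z) = f \<cdot> z" for z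
    by (simp_all add: assoc[symmetric] e f)
  \<comment> \<open>Both \<open>e f\<close> and \<open>f e\<close> are inverses of the idempotent \<open>e f\<close>.\<close>
  have "e \<cdot> f = ginv (e \<cdot> f)"
    using ginv_unique[of "e \<cdot> f" "e \<cdot> f"] ef by simp
  moreover have "f \<cdot> e = ginv (e \<cdot> f)"
  proof (rule ginv_unique)
    show "e \<cdot> f \<cdot> (f \<cdot> e) \<cdot> (e \<cdot> f) = e \<cdot> f"
      using ef by (simp add: assoc e2 f2)
    show "f \<cdot> e \<cdot> (e \<cdot> f) \<cdot> (f \<cdot> e) = f \<cdot> e"
      using fe by (simp add: assoc e2 f2)
  qed
  ultimately show ?thesis
    by simp
qed

lemma idempotent_eq_mult_ginv:
  assumes e: "e \<cdot> e = e" and e_in: "e = c \<cdot> z" and ec: "e \<cdot> c = c"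
  shows "e = c \<cdot> ginv c"
proof -
  define h where "h = c \<cdot> ginv c"
  have "h \<cdot> e = e"
    unfolding h_def e_in by (simp add: assoc[symmetric] mult_ginv_mult)
  moreover have "e \<cdot> h = h"
    unfolding h_def by (simp add: assoc[symmetric] ec)
  moreover have "h \<cdot> e = e \<cdot> h"
    using idempotents_commute e mult_ginv_idempotent h_def by blast
  ultimately show ?thesis
    using h_def by simp
qed

end

lemma left_inverse_semi_brace_inverse_semigroup:
  "left_inverse_semi_brace add mult \<Longrightarrow> inverse_semigroup_mult mult"
  unfolding left_inverse_semi_brace_def by (simp add: inverse_semigroup_mult.intro)

lemma semi_brace_mult_add:
  "left_inverse_semi_brace add mult \<Longrightarrow> mult a (add b c) = add (mult a b) (lam add mult a c)"
  unfolding left_inverse_semi_brace_def lam_def by blast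

lemma semi_brace_lam_absorb:
  "left_inverse_semi_brace add mult \<Longrightarrow>
    add (mult a (isg_inv mult a)) (lam add mult a b) = lam add mult a b"
  using semi_brace_mult_add[of add mult a "isg_inv mult a" b] by (simp add: lam_def)

lemma hom_into_aut_bij: "hom_into_aut multT addS \<alpha> \<Longrightarrow> bij (\<alpha> u)"
  unfolding hom_into_aut_def add_aut_def by blast

lemma hom_into_aut_apply_inv:
  "hom_into_aut multT addS \<alpha> \<Longrightarrow> \<alpha> u (inv (\<alpha> u) x) = x"
  by (simp add: hom_into_aut_bij bij_is_surj surj_f_inv_f)

lemma hom_into_aut_add:
  "hom_into_aut multT addS \<alpha> \<Longrightarrow> \<alpha> u (addS x y) = addS (\<alpha> u x) (\<alpha> u y)"
  unfolding hom_into_aut_def add_aut_def by blast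

lemma hom_into_aut_idempotent:
  assumes H: "hom_into_aut multT addS \<alpha>" and e: "multT e e = e"
  shows "\<alpha> e = id"
proof
  fix x
  have "\<alpha> e = \<alpha> e \<circ> \<alpha> e"
    using H e unfolding hom_into_aut_def by metis
  then have "\<alpha> e (\<alpha> e x) = \<alpha> e x"
    by (metis comp_apply)
  then show "\<alpha> e x = id x"
    using hom_into_aut_bij[OF H] by (simp add: bij_is_inj inj_eq)
qed

lemma matched_product_systemD:
  assumes "matched_product_system addS multS addT multT \<alpha> \<beta>"
  shows "left_inverse_semi_brace addS multS"
    and "hom_into_aut multT addS \<alpha>"
    and "hom_into_aut multS addT \<beta>"
    and "\<alpha> u (multS (inv (\<alpha> u) a) b) = multS a (\<alpha> (inv (\<beta> a) u) b)"
  using assms unfolding matched_product_system_def by blast+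

lemma matched_product_system_swap:
  "matched_product_system addS multS addT multT \<alpha> \<beta> \<Longrightarrow>
    matched_product_system addT multT addS multS \<beta> \<alpha>"
  unfolding matched_product_system_def by blast

lemma matched_alpha_mult_idempotent:
  assumes M: "matched_product_system addS multS addT multT \<alpha> \<beta>" and f: "multS f f = f"
  shows "\<alpha> u (multS (inv (\<alpha> u) f) y) = multS f (\<alpha> u y)"
proof -
  have "inv (\<beta> f) u = u"
    using hom_into_aut_idempotent[OF matched_product_systemD(3)[OF M] f] by (simp add: inv_id)
  then show ?thesis
    using matched_product_systemD(4)[OF M, of u f y] by simp
qed

lemma matched_alpha_mult_ginv:
  assumes M: "matched_product_system addS multS addT multT \<alpha> \<beta>" and c_to_a: "\<alpha> u c = a"
  shows "\<alpha> u (multS c (isg_inv multS c)) = multS a (isg_inv multS a)"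
proof -
  interpret S: inverse_semigroup_mult multS
    using left_inverse_semi_brace_inverse_semigroup[OF matched_product_systemD(1)[OF M]] .
  note \<alpha>_inv = hom_into_aut_apply_inv[OF matched_product_systemD(2)[OF M]]
  have bij: "bij (\<alpha> u)"
    using hom_into_aut_bij[OF matched_product_systemD(2)[OF M]] .
  then have \<alpha>_inj: "\<And>x y. \<alpha> u x = \<alpha> u y \<Longrightarrow> x = y"
    by (meson bij_is_inj injD)
  have c: "c = inv (\<alpha> u) a"
    using bij c_to_a by (simp add: bij_inv_eq_iff)
  define f where "f = multS a (S.ginv a)"
  define g where "g = inv (\<alpha> u) f"
  have f_idem: "multS f f = f"
    unfolding f_def by (rule S.mult_ginv_idempotent)
  have g_mult: "\<alpha> u (multS g y) = multS f (\<alpha> u y)" for y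
    unfolding g_def using matched_alpha_mult_idempotent[OF M f_idem] .
  have "\<alpha> u g = f"
    unfolding g_def by (rule \<alpha>_inv)
  have "multS g g = g"
    using g_mult \<open>\<alpha> u g = f\<close> f_idem \<alpha>_inj by metis
  moreover have "multS g c = c"
    using g_mult c_to_a f_def S.mult_ginv_mult \<alpha>_inj by metis
  moreover have "g = multS c (inv (\<alpha> (inv (\<beta> a) u)) (S.ginv a))"
    using matched_product_systemD(4)[OF M] \<open>\<alpha> u g = f\<close> \<alpha>_inv \<alpha>_inj c f_def by metis
  ultimately have "g = multS c (S.ginv c)"
    using S.idempotent_eq_mult_ginv by blast
  then show ?thesis
    using \<open>\<alpha> u g = f\<close> f_def by simp
qed

lemma matched_lam_alpha:
  assumes M: "matched_product_system addS multS addT multT \<alpha> \<beta>"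
  shows "lam addS multS a (\<alpha> (inv (\<beta> a) u) b) = \<alpha> u (lam addS multS (inv (\<alpha> u) a) b)"
proof -
  note brace = matched_product_systemD(1)[OF M]
  note \<alpha>_add = hom_into_aut_add[OF matched_product_systemD(2)[OF M]]
  note compat = matched_product_systemD(4)[OF M]
  note \<alpha>_inv = hom_into_aut_apply_inv[OF matched_product_systemD(2)[OF M]]
  define c where "c = inv (\<alpha> u) a"
  define w where "w = inv (\<beta> a) u"
  define z where "z = inv (\<alpha> w) (isg_inv multS a)"
  have "lam addS multS a (\<alpha> w b) = multS a (\<alpha> w (addS z b))"
    unfolding lam_def z_def by (simp add: \<alpha>_add \<alpha>_inv)
  also have "\<dots> = \<alpha> u (multS c (addS z b))"
    unfolding c_def w_def by (rule compat[symmetric])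
  also have "\<dots> = addS (\<alpha> u (multS c z)) (\<alpha> u (lam addS multS c b))"
    by (simp add: semi_brace_mult_add[OF brace] \<alpha>_add)
  also have "\<alpha> u (multS c z) = multS a (isg_inv multS a)"
    unfolding c_def w_def z_def by (simp add: compat \<alpha>_inv)
  also have "\<dots> = \<alpha> u (multS c (isg_inv multS c))"
    using matched_alpha_mult_ginv[OF M] c_def \<alpha>_inv by metis
  also have "addS \<dots> (\<alpha> u (lam addS multS c b)) = \<alpha> u (lam addS multS c b)"
    by (simp add: \<alpha>_add[symmetric] semi_brace_lam_absorb[OF brace])
  finally show ?thesis
    unfolding c_def w_def .
qed

theorem lemma26:
  fixes addS multS :: "'a \<Rightarrow> 'a \<Rightarrow> 'a" and addT multT :: "'b \<Rightarrow> 'b \<Rightarrow> 'b"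
    and \<alpha> :: "'b \<Rightarrow> 'a \<Rightarrow> 'a" and \<beta> :: "'a \<Rightarrow> 'b \<Rightarrow> 'b"
  assumes "matched_product_system addS multS addT multT \<alpha> \<beta>"
  shows "\<forall>a u.
     lam addS multS a \<circ> \<alpha> (inv (\<beta> a) u) = \<alpha> u \<circ> lam addS multS (inv (\<alpha> u) a) \<and>
     lam addT multT u \<circ> \<beta> (inv (\<alpha> u) a) = \<beta> a \<circ> lam addT multT (inv (\<beta> a) u)"
  using matched_lam_alpha[OF assms] matched_lam_alpha[OF matched_product_system_swap[OF assms]]
  by (simp add: fun_eq_iff)

end
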